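(* Let $\rho:\pi_1(T^2)=\langle q,h\mid [q,h]=1\rangle\to SL(2,\mathbb{C})$ be a homomorphism. Then the twisted chain complex $C_*(T^2;V_{2N})$ defined by $\rho_{2N}=\sigma_{2N}\circ\rho$ is acyclic for every $N\ge1$ if and only if at least one of $\rho(q)$, $\rho(h)$ neither has finite odd order nor is a parabolic matrix of trace $2$ (i.e. a non-identity, non-diagonalizable matrix of trace $2$).
   Context: For $n\ge1$, let $V_n$ be the $\mathbb{C}$-vector space of homogeneous polynomials of degree $n-1$ in $z_1,z_2$, and let $\sigma_n:SL(2,\mathbb{C})\to SL(V_n)$ be the $n$-dimensional irreducible representation $(\sigma_n(A)p)(z_1,z_2)=p\big(A^{-1}(z_1,z_2)^T\big)$. For a finite CW-complex $W$ and a homomorphism $\rho:\pi_1(W)\to SL(2,\mathbb{C})$ put $\rho_n=\sigma_n\circ\rho$. The twisted chain complex is $C_*(W;V_n)=V_n\otimes_{\mathbb{Z}[\pi_1(W)]}C_*(\widetilde W;\mathbb{Z})$, where $\widetilde W$ is the universal cover, $V_n$ is a right $\mathbb{Z}[\pi_1(W)]$-module via $\rho_n^{-1}$, and its homology is denoted $H_*(W;V_n)$. The complex (or $\rho_n$) is called acyclic if $H_*(W;V_n)=0$. *)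

theory Defs
  imports "HOL-Analysis.Analysis"
begin

type_synonym cmat = "complex^2^2"
type_synonym cvec = "complex^2"

definition SL2 :: "cmat set" where
  "SL2 = {A. det A = 1}"

text \<open>V_n: homogeneous polynomials of degree n-1 in z1, z2, viewed as functions on C^2.\<close>
definition Vn :: "nat \<Rightarrow> (cvec \<Rightarrow> complex) set" where
  "Vn n = {p. \<exists>c :: nat \<Rightarrow> complex.
      \<forall>z. p z = (\<Sum>k<n. c k * (z$1)^k * (z$2)^(n - 1 - k))}"

definition sigma :: "nat \<Rightarrow> cmat \<Rightarrow> (cvec \<Rightarrow> complex) \<Rightarrow> (cvec \<Rightarrow> complex)" where
  "sigma n A p = (\<lambda>z. p (matrix_inv A *v z))"

primrec mpow :: "cmat \<Rightarrow> nat \<Rightarrow> cmat" where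
  "mpow A 0 = mat 1"
| "mpow A (Suc k) = A ** mpow A k"

definition finite_odd_order :: "cmat \<Rightarrow> bool" where
  "finite_odd_order A \<longleftrightarrow> (\<exists>k>0. mpow A k = mat 1 \<and> (\<forall>j. 0 < j \<and> j < k \<longrightarrow> mpow A j \<noteq> mat 1) \<and> odd k)"

definition diagonalizable_mat :: "cmat \<Rightarrow> bool" where
  "diagonalizable_mat A \<longleftrightarrow> (\<exists>P :: cmat. invertible P \<and>
      (\<forall>i j. i \<noteq> j \<longrightarrow> (matrix_inv P ** A ** P) $ i $ j = 0))"

definition parabolic_tr2 :: "cmat \<Rightarrow> bool" where
  "parabolic_tr2 A \<longleftrightarrow> trace A = 2 \<and> A \<noteq> mat 1 \<and> \<not> diagonalizable_mat A"

text \<open>Twisted chain complex of the torus T^2 with its standard CW structure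
 (one 0-cell, 1-cells q,h, one 2-cell attached along q h q^-1 h^-1), with
 coefficients in V_n, where V_n is a right module via v.g = rho_n(g)^{-1} v.
 Here Q = rho(q), H = rho(h).  C_2 = V_n, C_1 = V_n x V_n, C_0 = V_n; the
 boundaries come from the Fox derivatives d r/d q = 1 - h, d r/d h = q - 1.\<close>
definition ract :: "nat \<Rightarrow> cmat \<Rightarrow> (cvec \<Rightarrow> complex) \<Rightarrow> (cvec \<Rightarrow> complex)" where
  "ract n A v = sigma n (matrix_inv A) v"

definition bd2 :: "nat \<Rightarrow> cmat \<Rightarrow> cmat \<Rightarrow> (cvec \<Rightarrow> complex) \<Rightarrow> (cvec \<Rightarrow> complex) \<times> (cvec \<Rightarrow> complex)" where
  "bd2 n Q H v = ((\<lambda>z. v z - ract n H v z), (\<lambda>z. ract n Q v z - v z))"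

definition bd1 :: "nat \<Rightarrow> cmat \<Rightarrow> cmat \<Rightarrow> (cvec \<Rightarrow> complex) \<times> (cvec \<Rightarrow> complex) \<Rightarrow> (cvec \<Rightarrow> complex)" where
  "bd1 n Q H x = (\<lambda>z. (ract n Q (fst x) z - fst x z) + (ract n H (snd x) z - snd x z))"

text \<open>Acyclic: H_2 = ker bd2 = 0, H_1 = ker bd1 / im bd2 = 0, H_0 = C_0 / im bd1 = 0.\<close>
definition torus_acyclic :: "nat \<Rightarrow> cmat \<Rightarrow> cmat \<Rightarrow> bool" where
  "torus_acyclic n Q H \<longleftrightarrow>
     (\<forall>v\<in>Vn n. bd2 n Q H v = ((\<lambda>_. 0), (\<lambda>_. 0)) \<longrightarrow> v = (\<lambda>_. 0)) \<and>
     (\<forall>x\<in>Vn n \<times> Vn n. bd1 n Q H x = (\<lambda>_. 0) \<longrightarrow> (\<exists>v\<in>Vn n. x = bd2 n Q H v)) \<and>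
     (\<forall>w\<in>Vn n. \<exists>x\<in>Vn n \<times> Vn n. w = bd1 n Q H x)"

end

theory Submission
  imports Defs "HOL-Library.Function_Algebras"
begin

text \<open>Identify \<open>V\<^sub>m\<^sub>+\<^sub>1\<close> with the homogeneous polynomials of degree \<open>m\<close> on \<open>\<complex>\<^sup>2\<close>, on which
  \<open>A = \<rho>(g)\<close> acts by \<open>p \<mapsto> p \<circ> A\<close>. The twisted complex of the torus is then the Koszul complex of
  the commuting operators \<open>a = \<rho>(q)\<^sup>* - 1\<close> and \<open>b = \<rho>(h)\<^sup>* - 1\<close>, which is acyclic as soon as one of
  them is invertible. Triangularising \<open>A\<close> with diagonal \<open>(\<alpha>, \<alpha>\<^sup>-\<^sup>1)\<close> shows that
  \<open>p \<mapsto> p \<circ> A - p\<close> is invertible in degree \<open>m\<close> unless \<open>\<alpha>\<^sup>2\<^sup>k\<^sup>-\<^sup>m = 1\<close> for some \<open>k \<le> m\<close>; for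
  odd \<open>m\<close> this means that \<open>\<alpha>\<close> is a root of unity of odd order, i.e. that \<open>A\<close> has finite odd order
  or is parabolic of trace 2. Conversely, if both matrices are of this kind, a common eigenvector
  \<open>w\<close> of their transposes has odd roots of unity as eigenvalues, and \<open>(w \<bullet> z)\<^sup>m\<close> for a suitable
  odd \<open>m\<close> is a nonzero invariant, i.e. a nonzero 2-cycle.\<close>

section \<open>Koszul complex of two commuting endomorphisms\<close>

definition koszul_acyclic :: "'v::ab_group_add set \<Rightarrow> ('v \<Rightarrow> 'v) \<Rightarrow> ('v \<Rightarrow> 'v) \<Rightarrow> bool" where
  "koszul_acyclic S a b \<longleftrightarrow>
     (\<forall>v\<in>S. b v = 0 \<and> a v = 0 \<longrightarrow> v = 0) \<and>
     (\<forall>x\<in>S. \<forall>y\<in>S. a x + b y = 0 \<longrightarrow> (\<exists>v\<in>S. x = - b v \<and> y = a v)) \<and>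
     (\<forall>w\<in>S. \<exists>x\<in>S. \<exists>y\<in>S. w = a x + b y)"

locale commuting_endomorphisms =
  fixes S :: "'v::ab_group_add set" and a b :: "'v \<Rightarrow> 'v"
  assumes zero_mem: "0 \<in> S"
    and diff_mem: "x \<in> S \<Longrightarrow> y \<in> S \<Longrightarrow> x - y \<in> S"
    and a_mem: "x \<in> S \<Longrightarrow> a x \<in> S" and b_mem: "x \<in> S \<Longrightarrow> b x \<in> S"
    and a_diff: "x \<in> S \<Longrightarrow> y \<in> S \<Longrightarrow> a (x - y) = a x - a y"
    and b_diff: "x \<in> S \<Longrightarrow> y \<in> S \<Longrightarrow> b (x - y) = b x - b y"
    and commute: "x \<in> S \<Longrightarrow> a (b x) = b (a x)"
begin

lemma swap: "commuting_endomorphisms S b a"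
  by unfold_locales (simp_all add: zero_mem diff_mem a_mem b_mem a_diff b_diff commute)

lemma minus_mem: "x \<in> S \<Longrightarrow> - x \<in> S"
  using diff_mem[OF zero_mem] by fastforce

lemma add_mem: "x \<in> S \<Longrightarrow> y \<in> S \<Longrightarrow> x + y \<in> S"
  using diff_mem[of x "- y"] minus_mem by simp

lemma a_zero: "a 0 = 0"
  using a_diff[OF zero_mem zero_mem] by simp

lemma a_minus: "x \<in> S \<Longrightarrow> a (- x) = - a x"
  using a_diff[OF zero_mem] a_zero by fastforce

lemma a_add: "x \<in> S \<Longrightarrow> y \<in> S \<Longrightarrow> a (x + y) = a x + a y"
  using a_diff[of x "- y"] a_minus minus_mem by simp

lemma koszul_acyclic_if_bij_a:
  assumes "bij_betw a S S"
  shows "koszul_acyclic S a b"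
  unfolding koszul_acyclic_def
proof (intro conjI ballI impI)
  have ker: "x = 0" if "x \<in> S" "a x = 0" for x
    using inj_onD[OF bij_betw_imp_inj_on[OF assms], of x 0] that zero_mem a_zero by simp
  have surj: "\<exists>x\<in>S. a x = y" if "y \<in> S" for y
    using bij_betw_imp_surj_on[OF assms] that by (metis imageE)
  show "v = 0" if "v \<in> S" "b v = 0 \<and> a v = 0" for v
    using ker that by blast
  show "\<exists>v\<in>S. x = - b v \<and> y = a v" if xy: "x \<in> S" "y \<in> S" "a x + b y = 0" for x y
  proof -
    obtain v where v: "v \<in> S" "a v = y" using surj xy(2) by blast
    have "a (x + b v) = a x + b (a v)" using a_add commute xy(1) v(1) b_mem by simp
    then have "a (x + b v) = 0" using xy(3) v(2) by simp
    then have "x + b v = 0" using ker add_mem b_mem xy(1) v(1) by blast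
    then show ?thesis using v by (auto simp: eq_neg_iff_add_eq_0)
  qed
  show "\<exists>x\<in>S. \<exists>y\<in>S. w = a x + b y" if w: "w \<in> S" for w
  proof -
    obtain x where "x \<in> S" "a x = w" using surj w by blast
    then show ?thesis using zero_mem commuting_endomorphisms.a_zero[OF swap] by force
  qed
qed

lemma koszul_acyclic_swap:
  assumes "koszul_acyclic S b a"
  shows "koszul_acyclic S a b"
  unfolding koszul_acyclic_def
proof (intro conjI ballI impI)
  show "v = 0" if "v \<in> S" "b v = 0 \<and> a v = 0" for v
    using assms that unfolding koszul_acyclic_def by blast
  show "\<exists>v\<in>S. x = - b v \<and> y = a v" if xy: "x \<in> S" "y \<in> S" "a x + b y = 0" for x y
  proof -
    have "b y + a x = 0" using xy(3) by (simp add: add.commute)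
    then obtain v where v: "v \<in> S" "y = - a v" "x = b v"
      using assms xy(1,2) unfolding koszul_acyclic_def by blast
    have "x = - b (- v)" "y = a (- v)"
      using v a_minus commuting_endomorphisms.a_minus[OF swap] by simp_all
    then show ?thesis using minus_mem[OF v(1)] by blast
  qed
  show "\<exists>x\<in>S. \<exists>y\<in>S. w = a x + b y" if w: "w \<in> S" for w
  proof -
    have "\<forall>w\<in>S. \<exists>x\<in>S. \<exists>y\<in>S. w = b x + a y"
      using assms unfolding koszul_acyclic_def by (elim conjE)
    then obtain x y where "x \<in> S" "y \<in> S" "w = b x + a y" using w by blast
    then show ?thesis by (auto simp: add.commute)
  qed
qed

lemma koszul_acyclic_if_bij:
  "bij_betw a S S \<or> bij_betw b S S \<Longrightarrow> koszul_acyclic S a b"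
  using koszul_acyclic_if_bij_a commuting_endomorphisms.koszul_acyclic_if_bij_a[OF swap]
    koszul_acyclic_swap by blast

end

section \<open>2 \<times> 2 complex matrices\<close>

lemma matrix_vector_mult_2: "(M *v z)$i = M$i$1 * z$1 + M$i$2 * z$2" for M :: cmat
  by (simp add: matrix_vector_mult_def sum_2)

lemma matrix_inv_right: "invertible A \<Longrightarrow> A ** matrix_inv A = mat 1"
  and matrix_inv_left: "invertible A \<Longrightarrow> matrix_inv A ** A = mat 1"
  unfolding invertible_def matrix_inv_def by (metis (mono_tags, lifting) someI_ex)+

lemma matrix_inv_matrix_inv:
  fixes A :: "'a::semiring_1^'n^'n"
  assumes "invertible A"
  shows "matrix_inv (matrix_inv A) = A"
proof -
  have "invertible (matrix_inv A)"
    using assms matrix_inv_left matrix_inv_right unfolding invertible_def by blast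
  then have "matrix_inv (matrix_inv A) = (A ** matrix_inv A) ** matrix_inv (matrix_inv A)"
    using matrix_inv_right[OF assms] by simp
  also have "\<dots> = A"
    using matrix_inv_right[OF \<open>invertible (matrix_inv A)\<close>] by (simp add: matrix_mul_assoc[symmetric])
  finally show ?thesis .
qed

lemma mat_vector_mult: "mat c *v x = c *s (x :: 'a::semiring_1^'n)"
  by (simp add: vec_eq_iff matrix_vector_mult_def mat_def if_distrib if_distribR cong: if_cong)

lemma det_eq_0_iff_kernel:
  fixes A :: "'a::field^'n^'n"
  shows "det A = 0 \<longleftrightarrow> (\<exists>x. x \<noteq> 0 \<and> A *v x = 0)"
  by (metis invertible_det_nz invertible_left_inverse matrix_left_invertible_ker)

lemma cmat_eq_iff:
  fixes A B :: cmat
  shows "A = B \<longleftrightarrow> A$1$1 = B$1$1 \<and> A$1$2 = B$1$2 \<and> A$2$1 = B$2$1 \<and> A$2$2 = B$2$2"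
  by (auto simp: vec_eq_iff forall_2)

lemma matrix_matrix_mult_2:
  fixes A B :: cmat
  shows "(A ** B)$i$j = A$i$1 * B$1$j + A$i$2 * B$2$j"
  by (simp add: matrix_matrix_mult_def sum_2)

lemma trace_2: "trace (A :: cmat) = A$1$1 + A$2$2"
  by (simp add: trace_def sum_2)

lemma trace_transpose: "trace (transpose A) = trace (A :: 'a::semiring_1^'n^'n)"
  by (simp add: trace_def transpose_def)

lemma det_minus_mat_2:
  fixes A :: cmat
  shows "det (A - mat c) = c^2 - trace A * c + det A"
  by (simp add: det_2 trace_2 mat_def power2_eq_square algebra_simps)

lemma complex_quadratic_root: "\<exists>x::complex. x^2 - b * x + c = 0"
proof
  define s where "s = csqrt (b^2 - 4 * c)"
  have "((b + s) / 2)^2 - b * ((b + s) / 2) + c = (s^2 - (b^2 - 4 * c)) / 4"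
    by (simp add: field_simps power2_eq_square)
  then show "((b + s) / 2)^2 - b * ((b + s) / 2) + c = 0"
    by (simp add: s_def)
qed

lemma exists_eigenvector_2:
  fixes A :: cmat
  obtains v c where "v \<noteq> 0" "A *v v = c *s v"
proof -
  obtain c where "c^2 - trace A * c + det A = 0"
    using complex_quadratic_root by blast
  then obtain v where "v \<noteq> 0" "(A - mat c) *v v = 0"
    unfolding det_minus_mat_2[symmetric] det_eq_0_iff_kernel by blast
  then show thesis
    using that by (simp add: matrix_vector_mult_diff_rdistrib mat_vector_mult)
qed

lemma kernel_parallel_2:
  fixes M :: cmat
  assumes "M \<noteq> 0" "M *v u = 0" "M *v v = 0" "v \<noteq> 0"
  shows "\<exists>c. u = c *s v"
proof -
  obtain i j where "M$i$j \<noteq> 0"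
    using assms(1) by (auto simp: vec_eq_iff)
  then have row: "M$i$1 \<noteq> 0 \<or> M$i$2 \<noteq> 0"
    by (metis exhaust_2)
  have u: "M$i$1 * u$1 + M$i$2 * u$2 = 0" and v: "M$i$1 * v$1 + M$i$2 * v$2 = 0"
    using assms(2,3) matrix_vector_mult_2[of M _ i] by (metis zero_index)+
  have "M$i$1 * (u$1 * v$2 - u$2 * v$1) = v$2 * (M$i$1 * u$1 + M$i$2 * u$2) - u$2 * (M$i$1 * v$1 + M$i$2 * v$2)"
    "M$i$2 * (u$1 * v$2 - u$2 * v$1) = u$1 * (M$i$1 * v$1 + M$i$2 * v$2) - v$1 * (M$i$1 * u$1 + M$i$2 * u$2)"
    by (simp_all add: algebra_simps)
  then have cross: "u$1 * v$2 = u$2 * v$1"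
    using row u v by auto
  show ?thesis
  proof (cases "v$1 = 0")
    case True
    then have "v$2 \<noteq> 0" "u$1 = 0"
      using assms(4) cross by (auto simp: vec_eq_iff forall_2)
    then show ?thesis
      using True cross by (intro exI[of _ "u$2 / v$2"]) (auto simp: vec_eq_iff forall_2)
  next
    case False
    then show ?thesis
      using cross by (intro exI[of _ "u$1 / v$1"]) (auto simp: vec_eq_iff forall_2 field_simps)
  qed
qed

lemma common_eigenvector_2:
  fixes A B :: cmat
  assumes "A ** B = B ** A"
  obtains v a b where "v \<noteq> 0" "A *v v = a *s v" "B *v v = b *s v"
proof -
  obtain v a where v: "v \<noteq> 0" "A *v v = a *s v"
    by (rule exists_eigenvector_2)
  show thesis
  proof (cases "A = mat a")
    case True
    obtain w b where "w \<noteq> 0" "B *v w = b *s w"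
      by (rule exists_eigenvector_2)
    then show thesis
      using that True by (simp add: mat_vector_mult)
  next
    case False
    have ker: "(A - mat a) *v v = 0"
      using v(2) by (simp add: matrix_vector_mult_diff_rdistrib mat_vector_mult)
    have "(A - mat a) *v (B *v v) = A *v (B *v v) - a *s (B *v v)"
      by (simp only: matrix_vector_mult_diff_rdistrib mat_vector_mult)
    also have "A *v (B *v v) = B *v (A *v v)"
      by (simp add: matrix_vector_mul_assoc assms)
    also have "a *s (B *v v) = B *v (a *s v)"
      by (simp add: vector_scalar_commute)
    also have "B *v (A *v v) - B *v (a *s v) = B *v ((A - mat a) *v v)"
      by (simp only: matrix_vector_mult_diff_distrib matrix_vector_mult_diff_rdistrib mat_vector_mult)
    finally obtain b where "B *v v = b *s v"
      using kernel_parallel_2[of "A - mat a" "B *v v" v] False ker v(1) by auto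
    then show thesis
      using that v by blast
  qed
qed

lemma upper_triangularization:
  fixes A :: cmat
  obtains P U :: cmat where "invertible P" "A ** P = P ** U" "U$2$1 = 0"
proof -
  obtain v c where v: "v \<noteq> 0" "A *v v = c *s v"
    by (rule exists_eigenvector_2)
  define w :: cvec where "w = (if v$1 = 0 then vector [1, 0] else vector [0, 1])"
  define P :: cmat where "P = (\<chi> i j. if j = 1 then v$i else w$i)"
  have "det P \<noteq> 0"
    using v(1) by (auto simp: det_2 P_def w_def vec_eq_iff forall_2)
  then have P: "invertible P"
    by (simp add: invertible_det_nz)
  define U where "U = matrix_inv P ** A ** P"
  have "A ** P = P ** U"
    using matrix_inv_right[OF P] by (simp add: U_def matrix_mul_assoc)
  moreover have "U$2$1 = 0"
  proof -
    have Pe: "P *v vector [1, 0] = v"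
      by (simp add: P_def vec_eq_iff forall_2 matrix_vector_mult_2)
    have "U *v vector [1, 0] = c *s (matrix_inv P *v (P *v vector [1, 0]))"
      unfolding U_def by (simp add: matrix_vector_mul_assoc[symmetric] Pe v(2) vector_scalar_commute)
    also have "\<dots> = c *s vector [1, 0]"
      using matrix_inv_left[OF P] by (simp add: matrix_vector_mul_assoc)
    finally have "(U *v vector [1, 0])$2 = 0"
      by simp
    then show ?thesis
      by (simp add: matrix_vector_mult_2)
  qed
  ultimately show thesis
    using that P by blast
qed

lemma similar_det:
  fixes A P U :: "'a::field^'n^'n"
  assumes "invertible P" "A ** P = P ** U"
  shows "det A = det U"
proof -
  have "det A * det P = det P * det U"
    using arg_cong[OF assms(2), of det] by (simp add: det_mul)
  moreover have "det P \<noteq> 0"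
    using assms(1) by (simp add: invertible_det_nz)
  ultimately show ?thesis
    by (simp add: mult.commute)
qed

lemma similar_trace:
  fixes A P U :: "'a::field^'n^'n"
  assumes "invertible P" "A ** P = P ** U"
  shows "trace A = trace U"
proof -
  have "A = (A ** P) ** matrix_inv P"
    using matrix_inv_right[OF assms(1)] by (simp add: matrix_mul_assoc[symmetric])
  also have "\<dots> = P ** (U ** matrix_inv P)"
    using assms(2) by (simp add: matrix_mul_assoc)
  finally have "A = P ** (U ** matrix_inv P)" .
  then have "trace A = trace (U ** matrix_inv P ** P)"
    using trace_mul_sym[of P "U ** matrix_inv P"] by simp
  then show ?thesis
    using matrix_inv_left[OF assms(1)] by (simp add: matrix_mul_assoc[symmetric])
qed

lemma similar_upper_triangular_diag:
  fixes A P U :: cmat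
  assumes "invertible P" "A ** P = P ** U" "U$2$1 = 0"
  shows "U$1$1 * U$2$2 = det A" "U$1$1 + U$2$2 = trace A"
  using similar_det[OF assms(1,2)] similar_trace[OF assms(1,2)] assms(3)
  by (simp_all add: det_2 trace_2)

section \<open>Matrices of finite odd order and parabolic matrices\<close>

lemma mpow_add: "mpow A (a + b) = mpow A a ** mpow A b"
  by (induction a) (simp_all add: matrix_mul_assoc)

lemma mpow_similar:
  assumes "A ** P = P ** U"
  shows "mpow A n ** P = P ** mpow U n"
proof (induction n)
  case 0
  then show ?case by simp
next
  case (Suc n)
  have "mpow A (Suc n) ** P = A ** (mpow A n ** P)"
    by (simp add: matrix_mul_assoc)
  also have "\<dots> = (A ** P) ** mpow U n"
    using Suc by (simp add: matrix_mul_assoc)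
  also have "\<dots> = P ** mpow U (Suc n)"
    using assms by (simp add: matrix_mul_assoc)
  finally show ?case .
qed

lemma mpow_eq_1_similar_iff:
  assumes "invertible P" "A ** P = P ** U"
  shows "mpow A n = mat 1 \<longleftrightarrow> mpow U n = mat 1"
proof -
  have eq: "mpow A n ** P = P ** mpow U n"
    using mpow_similar[OF assms(2)] .
  show ?thesis
  proof
    assume A1: "mpow A n = mat 1"
    have "P ** mpow U n = P"
      using eq[unfolded A1 matrix_mul_lid, symmetric] .
    then have "matrix_inv P ** (P ** mpow U n) = matrix_inv P ** P"
      by simp
    then show "mpow U n = mat 1"
      using matrix_inv_left[OF assms(1)] by (simp add: matrix_mul_assoc)
  next
    assume "mpow U n = mat 1"
    then have "(mpow A n ** P) ** matrix_inv P = P ** matrix_inv P"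
      using eq by simp
    then show "mpow A n = mat 1"
      using matrix_inv_right[OF assms(1)] by (simp add: matrix_mul_assoc[symmetric])
  qed
qed

lemma mpow_upper_triangular:
  fixes U :: cmat
  assumes "U$2$1 = 0"
  shows "(mpow U n)$2$1 = 0 \<and> (mpow U n)$1$1 = U$1$1^n \<and> (mpow U n)$2$2 = U$2$2^n
     \<and> (U$1$1 - U$2$2) * (mpow U n)$1$2 = U$1$2 * (U$1$1^n - U$2$2^n)"
proof (induction n)
  case 0
  then show ?case by (simp add: mat_def)
next
  case (Suc n)
  have IH: "(U$1$1 - U$2$2) * (mpow U n)$1$2 = U$1$2 * (U$1$1^n - U$2$2^n)"
    using Suc by blast
  have "(U$1$1 - U$2$2) * (U$1$1 * (mpow U n)$1$2 + U$1$2 * U$2$2^n)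
      = U$1$1 * ((U$1$1 - U$2$2) * (mpow U n)$1$2) + (U$1$1 - U$2$2) * U$1$2 * U$2$2^n"
    by (simp add: algebra_simps)
  also have "\<dots> = U$1$2 * (U$1$1^Suc n - U$2$2^Suc n)"
    unfolding IH by (simp add: algebra_simps)
  finally show ?case
    using Suc assms by (simp add: matrix_matrix_mult_2)
qed

lemma finite_odd_order_if_mpow_eq_1:
  assumes "0 < j" "odd j" "mpow A j = mat 1"
  shows "finite_odd_order A"
proof -
  define k where "k = (LEAST k. 0 < k \<and> mpow A k = mat 1)"
  have k: "0 < k \<and> mpow A k = mat 1"
    unfolding k_def by (rule LeastI[of _ j]) (use assms in auto)
  have min: "mpow A i \<noteq> mat 1" if "0 < i" "i < k" for i
    using not_less_Least[of i "\<lambda>k. 0 < k \<and> mpow A k = mat 1"] that unfolding k_def by blast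
  have "mpow A (k * t) = mat 1" for t
    by (induction t) (simp_all add: mpow_add k)
  moreover have "mpow A j = mpow A (k * (j div k)) ** mpow A (j mod k)"
    by (simp add: mpow_add[symmetric])
  ultimately have "mpow A (j mod k) = mat 1"
    using assms(3) by simp
  then have "j mod k = 0"
    using min[of "j mod k"] k by (meson mod_less_divisor neq0_conv)
  then have "odd k"
    using assms(2) by (metis dvd_trans even_iff_mod_2_eq_zero mod_0_imp_dvd)
  then show ?thesis
    unfolding finite_odd_order_def using k min by blast
qed

lemma eq_1_if_similar_1:
  fixes A P :: cmat
  assumes "invertible P" "A ** P = P"
  shows "A = mat 1"
  using arg_cong[OF assms(2), of "\<lambda>X. X ** matrix_inv P"] matrix_inv_right[OF assms(1)]
  by (simp add: matrix_mul_assoc[symmetric])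

lemma eq_1_if_sum_2_prod_1:
  fixes a b :: complex
  assumes "a + b = 2" "a * b = 1"
  shows "a = 1"
proof -
  have "(a - 1)^2 = a * a - 2 * a + 1"
    by (simp add: power2_eq_square algebra_simps)
  also have "\<dots> = a * a - (a + b) * a + a * b"
    unfolding assms ..
  also have "\<dots> = 0"
    by (simp add: algebra_simps)
  finally show ?thesis
    by simp
qed

lemma diagonalizable_trace_2_eq_1:
  fixes A :: cmat
  assumes "det A = 1" "trace A = 2" "diagonalizable_mat A"
  shows "A = mat 1"
proof -
  obtain P :: cmat where P: "invertible P"
    and off: "\<forall>i j. i \<noteq> j \<longrightarrow> (matrix_inv P ** A ** P)$i$j = 0"
    using assms(3) unfolding diagonalizable_mat_def by blast
  define D where "D = matrix_inv P ** A ** P"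
  have sim: "A ** P = P ** D"
    using matrix_inv_right[OF P] by (simp add: D_def matrix_mul_assoc)
  have D: "D$1$2 = 0" "D$2$1 = 0"
    using off by (simp_all add: D_def)
  have "D$1$1 * D$2$2 = 1" and tr: "D$1$1 + D$2$2 = 2"
    using similar_upper_triangular_diag[OF P sim D(2)] assms(1,2) by simp_all
  then have "D$1$1 = 1"
    using eq_1_if_sum_2_prod_1 by blast
  then have "D = mat 1"
    using D tr by (simp add: cmat_eq_iff mat_def)
  then show ?thesis
    using eq_1_if_similar_1[OF P] sim by simp
qed

lemma odd_root_if_odd_order_or_parabolic:
  fixes A P U :: cmat
  assumes A: "det A = 1" "finite_odd_order A \<or> parabolic_tr2 A"
    and P: "invertible P" "A ** P = P ** U" and U: "U$2$1 = 0"
  shows "\<exists>p. odd p \<and> U$1$1^p = 1"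
  using A(2)
proof
  assume "finite_odd_order A"
  then obtain k where "odd k" "mpow A k = mat 1"
    unfolding finite_odd_order_def by blast
  moreover have "(mpow U k)$1$1 = U$1$1^k"
    using mpow_upper_triangular[OF U] by blast
  ultimately show ?thesis
    using mpow_eq_1_similar_iff[OF P, of k] by (auto simp: mat_def)
next
  assume "parabolic_tr2 A"
  then have "U$1$1 = 1"
    using eq_1_if_sum_2_prod_1 similar_upper_triangular_diag[OF P U] A(1)
    unfolding parabolic_tr2_def by metis
  then show ?thesis
    by (intro exI[of _ 1]) simp
qed

lemma odd_order_or_parabolic_if_odd_root:
  fixes A P U :: cmat
  assumes A: "det A = 1" and P: "invertible P" "A ** P = P ** U" and U: "U$2$1 = 0"
    and p: "odd p" "U$1$1^p = 1"
  shows "finite_odd_order A \<or> parabolic_tr2 A"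
proof -
  note diag = similar_upper_triangular_diag[OF P U, unfolded A]
  have "U$2$2^p = 1"
    using p(2) diag(1) by (metis mult_1 power_mult_distrib power_one)
  show ?thesis
  proof (cases "U$1$1 = U$2$2")
    case True
    then have "U$1$1 = 1"
      using diag(1) p by (metis power_minus_odd power_one square_eq_1_iff)
    then have "trace A = 2"
      using diag(2) True by simp
    then show ?thesis
      using diagonalizable_trace_2_eq_1[OF A] finite_odd_order_if_mpow_eq_1[of 1 A]
      unfolding parabolic_tr2_def by auto
  next
    case False
    have "mpow U p = mat 1"
      using mpow_upper_triangular[OF U, of p] p(2) \<open>U$2$2^p = 1\<close> False
      by (simp add: cmat_eq_iff mat_def)
    then show ?thesis
      using finite_odd_order_if_mpow_eq_1[of p A] mpow_eq_1_similar_iff[OF P] p(1)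
      by (auto intro: odd_pos)
  qed
qed

lemma char_root_if_eigenvector:
  fixes A :: cmat
  assumes "v \<noteq> 0" "A *v v = c *s v"
  shows "c^2 - trace A * c + det A = 0"
proof -
  have "(A - mat c) *v v = 0"
    using assms(2) by (simp add: matrix_vector_mult_diff_rdistrib mat_vector_mult)
  then show ?thesis
    using assms(1) det_eq_0_iff_kernel det_minus_mat_2 by metis
qed

lemma odd_root_if_char_root:
  fixes A :: cmat
  assumes A: "det A = 1" "finite_odd_order A \<or> parabolic_tr2 A" and c: "c^2 - trace A * c + 1 = 0"
  shows "\<exists>p. odd p \<and> c^p = 1"
proof -
  obtain P U :: cmat where P: "invertible P" "A ** P = P ** U" and U: "U$2$1 = 0"
    by (rule upper_triangularization)
  note diag = similar_upper_triangular_diag[OF P U, unfolded A(1)]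
  obtain p where p: "odd p" "U$1$1^p = 1"
    using odd_root_if_odd_order_or_parabolic[OF A P U] by blast
  have "U$2$2^p = 1"
    using p(2) diag(1) by (metis mult_1 power_mult_distrib power_one)
  moreover have "(c - U$1$1) * (c - U$2$2) = c^2 - trace A * c + 1"
    unfolding diag(2)[symmetric] using diag(1) by (simp add: power2_eq_square algebra_simps)
  ultimately show ?thesis
    using p c by auto
qed

lemma odd_root_if_odd_monomial_eq_1:
  fixes a d :: complex
  assumes ad: "a * d = 1" and m: "odd m" "k \<le> m" and e: "a^k * d^(m-k) = 1"
  shows "\<exists>j. odd j \<and> a^j = 1"
proof (cases "m \<le> 2 * k")
  case True
  have "a^k * d^(m-k) = a^(2 * k - m) * (a * d)^(m-k)"
    using True m(2) by (simp add: power_mult_distrib power_add[symmetric])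
  then show ?thesis
    using ad e m(1) True by (intro exI[of _ "2 * k - m"]) simp
next
  case False
  have "a^k * d^(m-k) = d^(m - 2 * k) * (a * d)^k"
    using False by (simp add: power_mult_distrib power_add[symmetric] algebra_simps)
  then have "d^(m - 2 * k) = 1"
    using ad e by simp
  then have "a^(m - 2 * k) = (a * d)^(m - 2 * k)"
    by (simp add: power_mult_distrib)
  then show ?thesis
    using ad m(1) False by (intro exI[of _ "m - 2 * k"]) simp
qed

section \<open>Homogeneous polynomials in two variables\<close>

definition homog_poly :: "nat \<Rightarrow> (cvec \<Rightarrow> complex) set" where
  "homog_poly m = {p. \<exists>c. \<forall>z. p z = (\<Sum>k\<le>m. c k * z$1^k * z$2^(m-k))}"

lemma homog_polyI: "(\<And>z. p z = (\<Sum>k\<le>m. c k * z$1^k * z$2^(m-k))) \<Longrightarrow> p \<in> homog_poly m"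
  unfolding homog_poly_def by blast

lemma Vn_Suc: "Vn (Suc m) = homog_poly m"
  by (simp add: Vn_def homog_poly_def lessThan_Suc_atMost)

lemma homog_poly_0: "p \<in> homog_poly 0 \<longleftrightarrow> (\<exists>a. p = (\<lambda>_. a))"
  by (force simp: homog_poly_def)

lemma homog_poly_add:
  assumes "p \<in> homog_poly m" "q \<in> homog_poly m"
  shows "p + q \<in> homog_poly m"
proof -
  obtain c d where "\<And>z. p z = (\<Sum>k\<le>m. c k * z$1^k * z$2^(m-k))"
    "\<And>z. q z = (\<Sum>k\<le>m. d k * z$1^k * z$2^(m-k))"
    using assms unfolding homog_poly_def by blast
  then show ?thesis
    by (intro homog_polyI[where c = "\<lambda>k. c k + d k"]) (simp add: sum.distrib algebra_simps)
qed

lemma homog_poly_scale: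
  assumes "p \<in> homog_poly m"
  shows "(\<lambda>z. a * p z) \<in> homog_poly m"
proof -
  obtain c where "\<And>z. p z = (\<Sum>k\<le>m. c k * z$1^k * z$2^(m-k))"
    using assms unfolding homog_poly_def by blast
  then show ?thesis
    by (intro homog_polyI[where c = "\<lambda>k. a * c k"]) (simp add: sum_distrib_left algebra_simps)
qed

lemma homog_poly_zero: "0 \<in> homog_poly m"
  by (rule homog_polyI[where c = "\<lambda>_. 0"]) simp

lemma homog_poly_diff: "p \<in> homog_poly m \<Longrightarrow> q \<in> homog_poly m \<Longrightarrow> p - q \<in> homog_poly m"
  using homog_poly_add[of p m "\<lambda>z. (-1) * q z"] homog_poly_scale[of q m "-1"]
  by (simp add: fun_diff_def plus_fun_def)

lemma homog_poly_z1_power: "(\<lambda>z. z$1^m) \<in> homog_poly m"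
  unfolding homog_poly_def
proof (intro CollectI exI allI)
  fix z :: cvec
  have "(\<Sum>k\<le>m. (if k = m then 1 else 0) * z$1^k * z$2^(m-k))
      = (\<Sum>k\<le>m. if k = m then z$1^k * z$2^(m-k) else 0)"
    by (rule sum.cong) auto
  then show "z$1^m = (\<Sum>k\<le>m. (if k = m then 1 else 0) * z$1^k * z$2^(m-k))"
    by simp
qed

lemma homog_poly_times_z1:
  assumes "p \<in> homog_poly m"
  shows "(\<lambda>z. z$1 * p z) \<in> homog_poly (Suc m)"
proof -
  obtain c where c: "\<And>z. p z = (\<Sum>k\<le>m. c k * z$1^k * z$2^(m-k))"
    using assms unfolding homog_poly_def by blast
  have "z$1 * p z = (\<Sum>k\<le>Suc m. case_nat 0 c k * z$1^k * z$2^(Suc m - k))" for z :: cvec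
    unfolding sum.atMost_Suc_shift by (simp add: c sum_distrib_left algebra_simps)
  then show ?thesis
    by (rule homog_polyI)
qed

lemma homog_poly_times_z2:
  assumes "p \<in> homog_poly m"
  shows "(\<lambda>z. z$2 * p z) \<in> homog_poly (Suc m)"
proof -
  obtain c where c: "\<And>z. p z = (\<Sum>k\<le>m. c k * z$1^k * z$2^(m-k))"
    using assms unfolding homog_poly_def by blast
  have "z$2 * p z = (\<Sum>k\<le>Suc m. (if k \<le> m then c k else 0) * z$1^k * z$2^(Suc m - k))"
    for z :: cvec
    unfolding sum.atMost_Suc c sum_distrib_left
    by (simp, intro sum.cong refl) (simp add: Suc_diff_le algebra_simps)
  then show ?thesis
    by (rule homog_polyI)
qed

lemma homog_poly_Suc_decomp:
  assumes "p \<in> homog_poly (Suc m)"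
  obtains q where "q \<in> homog_poly m" "\<And>z. p z = p (vector [1, 0]) * z$1^Suc m + z$2 * q z"
proof -
  obtain c where c: "\<And>z. p z = (\<Sum>k\<le>Suc m. c k * z$1^k * z$2^(Suc m - k))"
    using assms unfolding homog_poly_def by blast
  define q where "q z = (\<Sum>k\<le>m. c k * z$1^k * z$2^(m - k))" for z :: cvec
  have q: "q \<in> homog_poly m"
    unfolding homog_poly_def q_def by blast
  have low: "(\<Sum>k\<le>m. c k * z$1^k * z$2^(Suc m - k)) = z$2 * q z" for z :: cvec
    unfolding q_def sum_distrib_left by (rule sum.cong) (auto simp: Suc_diff_le)
  have p_eq: "p z = z$2 * q z + c (Suc m) * z$1^Suc m" for z
    by (simp add: c low[symmetric])
  show ?thesis
    by (rule that[OF q]) (simp add: p_eq[of "vector [1, 0]"] p_eq)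
qed

lemma homog_poly_comp_linear: "p \<in> homog_poly m \<Longrightarrow> (\<lambda>z. p (M *v z)) \<in> homog_poly m"
proof (induction m arbitrary: p)
  case 0
  then show ?case by (auto simp: homog_poly_0)
next
  case (Suc m)
  obtain q where q: "q \<in> homog_poly m"
    and p: "\<And>z. p z = p (vector [1, 0]) * z$1^Suc m + z$2 * q z"
    using homog_poly_Suc_decomp[OF Suc.prems] by blast
  define a where "a = p (vector [1, 0])"
  have f: "(\<lambda>z. a * (M *v z)$1^m) \<in> homog_poly m"
    using Suc.IH[OF homog_poly_scale[OF homog_poly_z1_power]] by simp
  have g: "(\<lambda>z. q (M *v z)) \<in> homog_poly m"
    using Suc.IH[OF q] .
  have "p (M *v z) = z$1 * (M$1$1 * (a * (M *v z)$1^m) + M$2$1 * q (M *v z))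
          + z$2 * (M$1$2 * (a * (M *v z)$1^m) + M$2$2 * q (M *v z))" for z
    by (subst p) (simp add: a_def[symmetric] matrix_vector_mult_2 algebra_simps)
  moreover have "(\<lambda>z. z$1 * (M$1$1 * (a * (M *v z)$1^m) + M$2$1 * q (M *v z))
          + z$2 * (M$1$2 * (a * (M *v z)$1^m) + M$2$2 * q (M *v z))) \<in> homog_poly (Suc m)"
    using homog_poly_add[OF homog_poly_times_z1 homog_poly_times_z2]
      homog_poly_add homog_poly_scale f g by (simp add: plus_fun_def)
  ultimately show ?case
    by simp
qed

lemma comp_z1_power_Suc_decomp:
  fixes U :: cmat
  obtains s where "s \<in> homog_poly m" "\<And>z. (U *v z)$1^Suc m = U$1$1^Suc m * z$1^Suc m + z$2 * s z"
proof -
  have "(\<lambda>z. (U *v z)$1^Suc m) \<in> homog_poly (Suc m)"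
    by (rule homog_poly_comp_linear[OF homog_poly_z1_power])
  then obtain s where s: "s \<in> homog_poly m"
    and h: "\<And>z. (U *v z)$1^Suc m = (U *v vector [1, 0])$1^Suc m * z$1^Suc m + z$2 * s z"
    using homog_poly_Suc_decomp by blast
  have e: "(U *v vector [1, 0])$1 = U$1$1"
    by (simp add: matrix_vector_mult_2)
  show thesis
    by (rule that[OF s h[unfolded e]])
qed

lemma homog_poly_axis:
  assumes "p \<in> homog_poly m"
  shows "p (vector [x, 0]) = p (vector [1, 0]) * x^m"
proof (cases m)
  case 0
  then show ?thesis using assms by (auto simp: homog_poly_0)
next
  case (Suc k)
  then obtain q where "\<And>z. p z = p (vector [1, 0]) * z$1^Suc k + z$2 * q z"
    using homog_poly_Suc_decomp assms by blast
  from this[of "vector [x, 0]"] show ?thesis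
    using Suc by simp
qed

lemma homog_poly_eq_0_if_z2_times:
  assumes p: "p \<in> homog_poly m" and z2p: "\<And>z. z$2 * p z = 0"
  shows "p = 0"
proof
  fix z :: cvec
  show "p z = 0 z"
  proof (cases "z$2 = 0")
    case False
    then show ?thesis using z2p[of z] by simp
  next
    case True
    obtain c where c: "\<And>z. p z = (\<Sum>k\<le>m. c k * z$1^k * z$2^(m-k))"
      using p unfolding homog_poly_def by blast
    define f where "f t = p (vector [z$1, t])" for t
    have "f = (\<lambda>t. \<Sum>k\<le>m. c k * z$1^k * t^(m-k))"
      by (simp add: fun_eq_iff f_def c)
    then have "isCont f 0"
      by (simp add: continuous_intros)
    moreover have "f t = 0" if "t \<noteq> 0" for t
      using z2p[of "vector [z$1, t]"] that by (simp add: f_def)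
    then have "\<forall>\<^sub>F t in at 0. f t = 0"
      by (simp add: eventually_at_filter always_eventually)
    ultimately have "f 0 = 0"
      by (metis at_neq_bot isCont_def tendsto_eventually tendsto_unique)
    moreover have "vector [z$1, 0] = z"
      using True by (simp add: vec_eq_iff forall_2)
    ultimately show ?thesis
      by (simp add: f_def)
  qed
qed

section \<open>Composition operators on homogeneous polynomials\<close>

lemma ne_monomials_divide:
  fixes \<alpha> \<delta> \<mu> :: complex
  assumes "\<delta> \<noteq> 0" and "\<forall>k\<le>Suc m. \<mu> \<noteq> \<alpha>^k * \<delta>^(Suc m - k)"
  shows "\<forall>k\<le>m. \<mu> / \<delta> \<noteq> \<alpha>^k * \<delta>^(m - k)"
proof (intro allI impI notI)
  fix k assume k: "k \<le> m" and eq: "\<mu> / \<delta> = \<alpha>^k * \<delta>^(m - k)"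
  have "\<mu> = \<alpha>^k * \<delta>^(Suc m - k)"
    using assms(1) eq k by (simp add: Suc_diff_le field_simps)
  then show False
    using assms(2) k by simp
qed

text \<open>On polynomials of degree \<open>m\<close>, \<open>p \<mapsto> p \<circ> U\<close> has the eigenvalues \<open>U\<^sub>1\<^sub>1\<^sup>k U\<^sub>2\<^sub>2\<^sup>m\<^sup>-\<^sup>k\<close>.
  Both proofs fix the coefficient of \<open>z\<^sub>1\<^sup>m\<^sup>+\<^sup>1\<close> and recurse on the multiple of \<open>z\<^sub>2\<close>
  with \<open>\<mu> / U\<^sub>2\<^sub>2\<close>.\<close>
lemma comp_upper_triangular_eigen_eq_0:
  fixes U :: cmat
  assumes U: "U$2$1 = 0" "U$2$2 \<noteq> 0"
  shows "p \<in> homog_poly m \<Longrightarrow> \<forall>k\<le>m. \<mu> \<noteq> U$1$1^k * U$2$2^(m-k) \<Longrightarrow>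
    (\<And>z. p (U *v z) = \<mu> * p z) \<Longrightarrow> p = 0"
proof (induction m arbitrary: p \<mu>)
  case 0
  then show ?case by (force simp: homog_poly_0)
next
  case (Suc m)
  obtain q where q: "q \<in> homog_poly m"
    and p: "\<And>z. p z = p (vector [1, 0]) * z$1^Suc m + z$2 * q z"
    using homog_poly_Suc_decomp[OF Suc.prems(1)] by blast
  have "\<mu> * p (vector [1, 0]) = p (U *v vector [1, 0])"
    using Suc.prems(3) by simp
  also have "U *v vector [1, 0] = vector [U$1$1, 0]"
    using U(1) by (simp add: vec_eq_iff forall_2 matrix_vector_mult_2)
  also have "p \<dots> = U$1$1^Suc m * p (vector [1, 0])"
    using homog_poly_axis[OF Suc.prems(1), of "U$1$1"] by simp
  finally have "p (vector [1, 0]) = 0"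
    using Suc.prems(2)[rule_format, of "Suc m"] by simp
  then have pq: "p z = z$2 * q z" for z
    using p[of z] by simp
  have z2: "z$2 * (q (U *v z) - \<mu> / U$2$2 * q z) = 0" for z
    using Suc.prems(3)[of z] U by (simp add: pq matrix_vector_mult_2 field_simps)
  have "(\<lambda>z. q (U *v z) - \<mu> / U$2$2 * q z) \<in> homog_poly m"
    using homog_poly_diff[OF homog_poly_comp_linear[OF q] homog_poly_scale[OF q]]
    by (simp only: fun_diff_def)
  from homog_poly_eq_0_if_z2_times[OF this z2]
  have eq: "(\<lambda>z. q (U *v z) - \<mu> / U$2$2 * q z) = 0" .
  have "q (U *v z) = \<mu> / U$2$2 * q z" for z
    using fun_cong[OF eq, of z] by (simp only: zero_fun_apply right_minus_eq)
  then have "q = 0"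
    by (rule Suc.IH[OF q ne_monomials_divide[OF U(2) Suc.prems(2)]])
  then show ?case
    by (simp add: fun_eq_iff pq)
qed

lemma comp_upper_triangular_minus_scalar_expand:
  fixes U :: cmat
  assumes U: "U$2$1 = 0" "U$2$2 \<noteq> 0"
    and h: "\<And>z. (U *v z)$1^Suc m = U$1$1^Suc m * z$1^Suc m + z$2 * s z"
  shows "c * (U *v z)$1^Suc m + (U *v z)$2 * q (U *v z) - \<mu> * (c * z$1^Suc m + z$2 * q z)
    = c * (U$1$1^Suc m - \<mu>) * z$1^Suc m + z$2 * (c * s z + U$2$2 * (q (U *v z) - \<mu> / U$2$2 * q z))"
proof -
  have "(U *v z)$2 = U$2$2 * z$2"
    using U(1) by (simp add: matrix_vector_mult_2)
  then show ?thesis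
    unfolding h using U(2) by (simp add: field_simps)
qed

lemma comp_upper_triangular_minus_scalar_surj:
  fixes U :: cmat
  assumes U: "U$2$1 = 0" "U$2$2 \<noteq> 0"
  shows "r \<in> homog_poly m \<Longrightarrow> \<forall>k\<le>m. \<mu> \<noteq> U$1$1^k * U$2$2^(m-k) \<Longrightarrow>
    \<exists>p\<in>homog_poly m. \<forall>z. p (U *v z) - \<mu> * p z = r z"
proof (induction m arbitrary: r \<mu>)
  case 0
  then obtain a where r: "r = (\<lambda>_. a)" by (auto simp: homog_poly_0)
  have "\<mu> \<noteq> 1" using "0.prems"(2) by auto
  have "a / (1 - \<mu>) - \<mu> * (a / (1 - \<mu>)) = (1 - \<mu>) * (a / (1 - \<mu>))"
    by (simp only: left_diff_distrib mult_1)
  also have "\<dots> = a"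
    using \<open>\<mu> \<noteq> 1\<close> by simp
  finally show ?case
    using r by (intro bexI[of _ "\<lambda>_. a / (1 - \<mu>)"]) (auto simp: homog_poly_0)
next
  case (Suc m)
  define \<alpha> \<delta> where "\<alpha> = U$1$1" and "\<delta> = U$2$2"
  obtain r' where r': "r' \<in> homog_poly m"
    and r: "\<And>z. r z = r (vector [1, 0]) * z$1^Suc m + z$2 * r' z"
    using homog_poly_Suc_decomp[OF Suc.prems(1)] by blast
  obtain s where s: "s \<in> homog_poly m" and h: "\<And>z. (U *v z)$1^Suc m = \<alpha>^Suc m * z$1^Suc m + z$2 * s z"
    using comp_z1_power_Suc_decomp[where U = U and m = m] unfolding \<alpha>_def by blast
  have "\<alpha>^Suc m \<noteq> \<mu>"
    using Suc.prems(2)[rule_format, of "Suc m"] by (simp add: \<alpha>_def)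
  define c where "c = r (vector [1, 0]) / (\<alpha>^Suc m - \<mu>)"
  define r'' where "r'' = (\<lambda>z. (r' z - c * s z) / \<delta>)"
  have "r'' \<in> homog_poly m"
    using homog_poly_scale[OF homog_poly_diff[OF r' homog_poly_scale[OF s]], of "1 / \<delta>"]
    by (simp add: r''_def fun_diff_def)
  then obtain q where q: "q \<in> homog_poly m" and q_eq: "\<And>z. q (U *v z) - \<mu> / \<delta> * q z = r'' z"
    using Suc.IH[OF _ ne_monomials_divide[OF U(2) Suc.prems(2)]] unfolding \<delta>_def by blast
  define p where "p z = c * z$1^Suc m + z$2 * q z" for z
  have "p \<in> homog_poly (Suc m)"
    unfolding p_def using homog_poly_add[OF homog_poly_scale[OF homog_poly_z1_power] homog_poly_times_z2[OF q]]
    by (simp add: plus_fun_def)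
  moreover have "p (U *v z) - \<mu> * p z = r z" for z
  proof -
    have "p (U *v z) - \<mu> * p z
        = c * (\<alpha>^Suc m - \<mu>) * z$1^Suc m + z$2 * (c * s z + \<delta> * (q (U *v z) - \<mu> / \<delta> * q z))"
      unfolding p_def \<alpha>_def \<delta>_def by (rule comp_upper_triangular_minus_scalar_expand[OF U h[unfolded \<alpha>_def]])
    also have "\<dots> = c * (\<alpha>^Suc m - \<mu>) * z$1^Suc m + z$2 * (c * s z + \<delta> * r'' z)"
      by (simp only: q_eq)
    also have "\<dots> = r z"
      using \<open>\<alpha>^Suc m \<noteq> \<mu>\<close> U(2) by (simp add: r''_def c_def r[of z] \<delta>_def)
    finally show ?thesis .
  qed
  ultimately show ?case
    by blast
qed

definition act_minus_id :: "cmat \<Rightarrow> (cvec \<Rightarrow> complex) \<Rightarrow> cvec \<Rightarrow> complex" where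
  "act_minus_id A p = (\<lambda>z. p (A *v z) - p z)"

lemma act_minus_id_mem: "p \<in> homog_poly m \<Longrightarrow> act_minus_id A p \<in> homog_poly m"
  unfolding act_minus_id_def
  using homog_poly_diff[OF homog_poly_comp_linear] by (simp add: fun_diff_def)

lemma act_minus_id_diff: "act_minus_id A (p - q) = act_minus_id A p - act_minus_id A q"
  by (simp add: act_minus_id_def fun_eq_iff)

lemma bij_act_minus_id_upper_triangular:
  fixes U :: cmat
  assumes U: "U$2$1 = 0" "U$2$2 \<noteq> 0" and eig: "\<forall>k\<le>m. 1 \<noteq> U$1$1^k * U$2$2^(m-k)"
  shows "bij_betw (act_minus_id U) (homog_poly m) (homog_poly m)"
proof (rule bij_betw_imageI)
  show "inj_on (act_minus_id U) (homog_poly m)"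
  proof (rule inj_onI)
    fix p q assume pq: "p \<in> homog_poly m" "q \<in> homog_poly m" "act_minus_id U p = act_minus_id U q"
    have "(p - q) (U *v z) = 1 * (p - q) z" for z
      using fun_cong[OF pq(3), of z] by (simp add: act_minus_id_def algebra_simps)
    then have "p - q = 0"
      using comp_upper_triangular_eigen_eq_0[OF U homog_poly_diff[OF pq(1,2)] eig] by blast
    then show "p = q"
      by simp
  qed
  show "act_minus_id U ` homog_poly m = homog_poly m"
  proof
    show "act_minus_id U ` homog_poly m \<subseteq> homog_poly m"
      using act_minus_id_mem by blast
    show "homog_poly m \<subseteq> act_minus_id U ` homog_poly m"
    proof
      fix r assume "r \<in> homog_poly m"
      then obtain p where "p \<in> homog_poly m" "\<And>z. p (U *v z) - 1 * p z = r z"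
        using comp_upper_triangular_minus_scalar_surj[OF U _ eig] by blast
      then show "r \<in> act_minus_id U ` homog_poly m"
        by (intro image_eqI[of _ _ p]) (auto simp: act_minus_id_def)
    qed
  qed
qed

lemma bij_act_minus_id_similar:
  fixes A P U :: cmat
  assumes P: "invertible P" "A ** P = P ** U"
    and bij: "bij_betw (act_minus_id U) (homog_poly m) (homog_poly m)"
  shows "bij_betw (act_minus_id A) (homog_poly m) (homog_poly m)"
proof -
  define C where "C p = (\<lambda>z. p (P *v z))" for p :: "cvec \<Rightarrow> complex"
  have C: "bij_betw C (homog_poly m) (homog_poly m)"
  proof (rule bij_betw_byWitness[where f' = "\<lambda>p z. p (matrix_inv P *v z)"])
    show "\<forall>p\<in>homog_poly m. (\<lambda>z. C p (matrix_inv P *v z)) = p"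
      using matrix_inv_right[OF P(1)] by (simp add: C_def matrix_vector_mul_assoc)
    show "\<forall>p\<in>homog_poly m. C (\<lambda>z. p (matrix_inv P *v z)) = p"
      using matrix_inv_left[OF P(1)] by (simp add: C_def matrix_vector_mul_assoc)
  qed (auto simp: C_def intro: homog_poly_comp_linear)
  have "act_minus_id U \<circ> C = C \<circ> act_minus_id A"
    using P(2) by (simp add: fun_eq_iff C_def act_minus_id_def matrix_vector_mul_assoc)
  then have "bij_betw (C \<circ> act_minus_id A) (homog_poly m) (homog_poly m)"
    using bij_betw_trans[OF C bij] by simp
  then show ?thesis
    using bij_betw_comp_iff2[OF C, of "act_minus_id A"] act_minus_id_mem by blast
qed

lemma bij_act_minus_id:
  fixes A :: cmat
  assumes A: "det A = 1" "\<not> (finite_odd_order A \<or> parabolic_tr2 A)" and m: "odd m"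
  shows "bij_betw (act_minus_id A) (homog_poly m) (homog_poly m)"
proof -
  obtain P U :: cmat where P: "invertible P" "A ** P = P ** U" and U: "U$2$1 = 0"
    by (rule upper_triangularization)
  have det: "U$1$1 * U$2$2 = 1"
    using similar_upper_triangular_diag[OF P U] A(1) by simp
  have "\<forall>k\<le>m. 1 \<noteq> U$1$1^k * U$2$2^(m-k)"
    using odd_root_if_odd_monomial_eq_1[OF det m] A(2)
      odd_order_or_parabolic_if_odd_root[OF A(1) P U] by metis
  moreover have "U$2$2 \<noteq> 0"
    using det by auto
  ultimately show ?thesis
    using bij_act_minus_id_similar[OF P bij_act_minus_id_upper_triangular[OF U]] by blast
qed

section \<open>The twisted complex of the torus\<close>

lemma ract_SL2: "A \<in> SL2 \<Longrightarrow> ract n A v = (\<lambda>z. v (A *v z))"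
  by (simp add: ract_def sigma_def SL2_def invertible_det_nz matrix_inv_matrix_inv)

lemma torus_acyclic_iff_koszul_acyclic:
  assumes "Q \<in> SL2" "H \<in> SL2"
  shows "torus_acyclic n Q H \<longleftrightarrow> koszul_acyclic (Vn n) (act_minus_id Q) (act_minus_id H)"
proof -
  have bd2: "bd2 n Q H v = (- act_minus_id H v, act_minus_id Q v)" for v
    by (simp add: bd2_def ract_SL2 assms act_minus_id_def fun_eq_iff)
  have bd1: "bd1 n Q H x = act_minus_id Q (fst x) + act_minus_id H (snd x)" for x
    by (simp add: bd1_def ract_SL2 assms act_minus_id_def fun_eq_iff)
  show ?thesis
    unfolding torus_acyclic_def koszul_acyclic_def bd2 bd1 zero_fun_def[symmetric]
    by auto
qed

lemma commuting_endomorphisms_act_minus_id: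
  assumes "Q ** H = H ** Q"
  shows "commuting_endomorphisms (homog_poly m) (act_minus_id Q) (act_minus_id H)"
proof
  show "act_minus_id Q (act_minus_id H p) = act_minus_id H (act_minus_id Q p)" for p
    using assms by (simp add: act_minus_id_def matrix_vector_mul_assoc fun_eq_iff algebra_simps)
qed (simp_all add: homog_poly_zero homog_poly_diff act_minus_id_mem act_minus_id_diff)

lemma torus_acyclic_if_bij:
  assumes "Q \<in> SL2" "H \<in> SL2" "Q ** H = H ** Q"
    and "bij_betw (act_minus_id Q) (homog_poly m) (homog_poly m) \<or>
         bij_betw (act_minus_id H) (homog_poly m) (homog_poly m)"
  shows "torus_acyclic (Suc m) Q H"
  using commuting_endomorphisms.koszul_acyclic_if_bij[OF commuting_endomorphisms_act_minus_id]
    torus_acyclic_iff_koszul_acyclic Vn_Suc assms by metis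

lemma torus_acyclic_if_not_odd_order_or_parabolic:
  assumes SL2: "Q \<in> SL2" "H \<in> SL2" and comm: "Q ** H = H ** Q"
    and good: "\<not> (finite_odd_order Q \<or> parabolic_tr2 Q) \<or> \<not> (finite_odd_order H \<or> parabolic_tr2 H)"
    and m: "odd m"
  shows "torus_acyclic (Suc m) Q H"
  using torus_acyclic_if_bij[OF SL2 comm] bij_act_minus_id[OF _ _ m] good SL2
  by (auto simp: SL2_def)

definition linear_form_power :: "cvec \<Rightarrow> nat \<Rightarrow> cvec \<Rightarrow> complex" where
  "linear_form_power w m = (\<lambda>z. (w$1 * z$1 + w$2 * z$2)^m)"

lemma linear_form_power_homog: "linear_form_power w m \<in> homog_poly m"
proof -
  have "(\<lambda>z. (((\<chi> i j. w$j) :: cmat) *v z)$1^m) \<in> homog_poly m"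
    by (rule homog_poly_comp_linear[OF homog_poly_z1_power])
  then show ?thesis
    by (simp add: linear_form_power_def matrix_vector_mult_2)
qed

lemma linear_form_power_ne_0:
  assumes "w \<noteq> 0"
  shows "linear_form_power w m \<noteq> 0"
proof (cases "w$1 = 0")
  case True
  then have "w$2 \<noteq> 0"
    using assms by (auto simp: vec_eq_iff forall_2)
  then have "linear_form_power w m (vector [0, 1 / w$2]) = 1"
    using True by (simp add: linear_form_power_def)
  then show ?thesis
    by (metis one_neq_zero zero_fun_apply)
next
  case False
  then have "linear_form_power w m (vector [1 / w$1, 0]) = 1"
    by (simp add: linear_form_power_def)
  then show ?thesis
    by (metis one_neq_zero zero_fun_apply)
qed

lemma act_minus_id_linear_form_power:
  fixes A :: cmat
  assumes "transpose A *v w = c *s w" "c^m = 1"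
  shows "act_minus_id A (linear_form_power w m) = 0"
proof -
  have "(transpose A *v w)$1 = c * w$1" "(transpose A *v w)$2 = c * w$2"
    using assms(1) by simp_all
  then have eig: "A$1$1 * w$1 + A$2$1 * w$2 = c * w$1" "A$1$2 * w$1 + A$2$2 * w$2 = c * w$2"
    by (simp_all only: matrix_vector_mult_2 transpose_def vec_lambda_beta)
  have "w$1 * (A *v z)$1 + w$2 * (A *v z)$2
      = z$1 * (A$1$1 * w$1 + A$2$1 * w$2) + z$2 * (A$1$2 * w$1 + A$2$2 * w$2)" for z
    by (simp add: matrix_vector_mult_2 algebra_simps)
  also have "\<dots> z = c * (w$1 * z$1 + w$2 * z$2)" for z
    unfolding eig by (simp add: algebra_simps)
  finally show ?thesis
    using assms(2) by (simp add: act_minus_id_def linear_form_power_def fun_eq_iff power_mult_distrib)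
qed

lemma not_torus_acyclic_if_odd_order_or_parabolic:
  assumes SL2: "Q \<in> SL2" "H \<in> SL2" and comm: "Q ** H = H ** Q"
    and bad: "finite_odd_order Q \<or> parabolic_tr2 Q" "finite_odd_order H \<or> parabolic_tr2 H"
  shows "\<exists>m. odd m \<and> \<not> torus_acyclic (Suc m) Q H"
proof -
  have "transpose Q ** transpose H = transpose H ** transpose Q"
    using comm by (simp add: matrix_transpose_mul[symmetric])
  then obtain w a b where w: "w \<noteq> 0" "transpose Q *v w = a *s w" "transpose H *v w = b *s w"
    by (rule common_eigenvector_2)
  have "det Q = 1" "det H = 1"
    using SL2 by (simp_all add: SL2_def)
  then obtain p r where p: "odd p" "a^p = 1" and r: "odd r" "b^r = 1"
    using odd_root_if_char_root[OF _ bad(1)] odd_root_if_char_root[OF _ bad(2)]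
      char_root_if_eigenvector[OF w(1,2)] char_root_if_eigenvector[OF w(1,3)]
    by (metis det_transpose trace_transpose)
  have "a^(p * r) = 1"
    by (simp add: power_mult p(2))
  moreover have "b^(p * r) = 1"
    by (simp add: power_mult mult.commute[of p r] r(2))
  ultimately have
    "act_minus_id Q (linear_form_power w (p * r)) = 0"
    "act_minus_id H (linear_form_power w (p * r)) = 0"
    using act_minus_id_linear_form_power w by blast+
  then have "\<not> koszul_acyclic (Vn (Suc (p * r))) (act_minus_id Q) (act_minus_id H)"
    unfolding koszul_acyclic_def Vn_Suc
    using linear_form_power_homog linear_form_power_ne_0[OF w(1)] by blast
  moreover have "odd (p * r)"
    using p(1) r(1) by simp
  ultimately show ?thesis
    using torus_acyclic_iff_koszul_acyclic[OF SL2] by blast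
qed

theorem mainTheorem2:
  fixes Q H :: cmat
  assumes "Q \<in> SL2" and "H \<in> SL2" and "Q ** H = H ** Q"
  shows "(\<forall>N::nat. N \<ge> 1 \<longrightarrow> torus_acyclic (2 * N) Q H) \<longleftrightarrow>
         (\<not> (finite_odd_order Q \<or> parabolic_tr2 Q) \<or> \<not> (finite_odd_order H \<or> parabolic_tr2 H))"
proof
  assume "\<forall>N::nat. N \<ge> 1 \<longrightarrow> torus_acyclic (2 * N) Q H"
  moreover have "odd m \<Longrightarrow> Suc m = 2 * (Suc m div 2) \<and> Suc m div 2 \<ge> 1" for m :: nat
    by auto
  ultimately show "\<not> (finite_odd_order Q \<or> parabolic_tr2 Q) \<or> \<not> (finite_odd_order H \<or> parabolic_tr2 H)"
    using not_torus_acyclic_if_odd_order_or_parabolic[OF assms] by metis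
next
  assume good: "\<not> (finite_odd_order Q \<or> parabolic_tr2 Q) \<or> \<not> (finite_odd_order H \<or> parabolic_tr2 H)"
  show "\<forall>N::nat. N \<ge> 1 \<longrightarrow> torus_acyclic (2 * N) Q H"
  proof (intro allI impI)
    fix N :: nat
    assume "N \<ge> 1"
    then have "2 * N = Suc (2 * N - 1)" "odd (2 * N - 1)"
      by auto
    then show "torus_acyclic (2 * N) Q H"
      using torus_acyclic_if_not_odd_order_or_parabolic[OF assms good] by metis
  qed
qed

end
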